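(* Let $(L,[\cdot,\cdot],\alpha,\beta)$ be a left BiHom-Lie algebra and let $f:L\to L$ be a linear map with $f\circ\alpha=\alpha\circ f$ and $f\circ\beta=\beta\circ f$. Define two operations on $L$ by $x\star y=[f(x),y]$ and $x\star' y=[x,f(y)]$ for all $x,y\in L$. Then: (i) $(L,\star,\alpha,\beta)$ is a BiHom-Novikov algebra if and only if for all $x,y,z\in L$: $f([f(\beta(x)),\alpha(y)]+[\beta(x),f(\alpha(y))])-[f(\beta(x)),f(\alpha(y))]\in Z_l(\beta(L))$ and $[f([f(x),\beta(y)]),\alpha\beta(z)]=[f([f(x),\beta(z)]),\alpha\beta(y)]$. (ii) If $\alpha$ and $\beta$ are bijective, then $(L,\star',\alpha,\beta)$ is a BiHom-Novikov algebra if and only if for all $x,y,z\in L$: $[[\beta(x),f(\alpha(y))]+[f(\beta(x)),\alpha(y)],f(\beta(z))]-[\alpha\beta(x),f([\alpha(y),f(z)])]+[\alpha\beta(y),f([\alpha(x),f(z)])]=0$ and $[f(\beta(x)),f(\alpha(y))]\in Z_r(\alpha(L))$.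
   Context: Work over a field. A left BiHom-Lie algebra is a 4-tuple $(L,[\cdot,\cdot],\alpha,\beta)$ with $[\cdot,\cdot]$ bilinear and $\alpha,\beta:L\to L$ linear such that $\alpha\beta=\beta\alpha$, $\alpha([x,y])=[\alpha(x),\alpha(y)]$, $\beta([x,y])=[\beta(x),\beta(y)]$, $[\alpha\beta(x),[y,z]]=[[\beta(x),y],\beta(z)]+[\beta(y),[\alpha(x),z]]$ and $[\beta(x),\alpha(y)]=-[\beta(y),\alpha(x)]$ for all $x,y,z$. Let $Z_l(\beta(L))=\{x\in L: [x,\beta(y)]=0\ \forall y\in L\}$ and $Z_r(\alpha(L))=\{x\in L:[\alpha(y),x]=0\ \forall y\in L\}$. A BiHom-Novikov algebra is a 4-tuple $(A,\mu,\alpha,\beta)$ with $\mu:A\otimes A\to A$ (written $x\cdot y$) and commuting linear maps $\alpha,\beta$ such that for all $x,y,z$: $\alpha(x\cdot y)=\alpha(x)\cdot\alpha(y)$, $\beta(x\cdot y)=\beta(x)\cdot\beta(y)$, $(\beta(x)\cdot\alpha(y))\cdot\beta(z)-\alpha\beta(x)\cdot(\alpha(y)\cdot z)=(\beta(y)\cdot\alpha(x))\cdot\beta(z)-\alpha\beta(y)\cdot(\alpha(x)\cdot z)$, and $(x\cdot\beta(y))\cdot\alpha\beta(z)=(x\cdot\beta(z))\cdot\alpha\beta(y)$. *)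

theory Defs
  imports "HOL.Vector_Spaces"
begin

definition bilinear_op :: "('k::field \<Rightarrow> 'v::ab_group_add \<Rightarrow> 'v) \<Rightarrow> ('v \<Rightarrow> 'v \<Rightarrow> 'v) \<Rightarrow> bool" where
  "bilinear_op scale b \<longleftrightarrow>
     (\<forall>x. Vector_Spaces.linear scale scale (b x)) \<and>
     (\<forall>y. Vector_Spaces.linear scale scale (\<lambda>x. b x y))"

definition left_BiHom_Lie :: "('k::field \<Rightarrow> 'v::ab_group_add \<Rightarrow> 'v) \<Rightarrow> ('v \<Rightarrow> 'v \<Rightarrow> 'v)
    \<Rightarrow> ('v \<Rightarrow> 'v) \<Rightarrow> ('v \<Rightarrow> 'v) \<Rightarrow> bool" where
  "left_BiHom_Lie scale br \<alpha> \<beta> \<longleftrightarrow>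
     bilinear_op scale br \<and>
     Vector_Spaces.linear scale scale \<alpha> \<and> Vector_Spaces.linear scale scale \<beta> \<and>
     (\<alpha> \<circ> \<beta> = \<beta> \<circ> \<alpha>) \<and>
     (\<forall>x y. \<alpha> (br x y) = br (\<alpha> x) (\<alpha> y)) \<and>
     (\<forall>x y. \<beta> (br x y) = br (\<beta> x) (\<beta> y)) \<and>
     (\<forall>x y z. br (\<alpha> (\<beta> x)) (br y z) = br (br (\<beta> x) y) (\<beta> z) + br (\<beta> y) (br (\<alpha> x) z)) \<and>
     (\<forall>x y. br (\<beta> x) (\<alpha> y) = - br (\<beta> y) (\<alpha> x))"

definition BiHom_Novikov :: "('k::field \<Rightarrow> 'v::ab_group_add \<Rightarrow> 'v) \<Rightarrow> ('v \<Rightarrow> 'v \<Rightarrow> 'v)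
    \<Rightarrow> ('v \<Rightarrow> 'v) \<Rightarrow> ('v \<Rightarrow> 'v) \<Rightarrow> bool" where
  "BiHom_Novikov scale mu \<alpha> \<beta> \<longleftrightarrow>
     bilinear_op scale mu \<and>
     Vector_Spaces.linear scale scale \<alpha> \<and> Vector_Spaces.linear scale scale \<beta> \<and>
     (\<alpha> \<circ> \<beta> = \<beta> \<circ> \<alpha>) \<and>
     (\<forall>x y. \<alpha> (mu x y) = mu (\<alpha> x) (\<alpha> y)) \<and>
     (\<forall>x y. \<beta> (mu x y) = mu (\<beta> x) (\<beta> y)) \<and>
     (\<forall>x y z. mu (mu (\<beta> x) (\<alpha> y)) (\<beta> z) - mu (\<alpha> (\<beta> x)) (mu (\<alpha> y) z)
             = mu (mu (\<beta> y) (\<alpha> x)) (\<beta> z) - mu (\<alpha> (\<beta> y)) (mu (\<alpha> x) z)) \<and>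
     (\<forall>x y z. mu (mu x (\<beta> y)) (\<alpha> (\<beta> z)) = mu (mu x (\<beta> z)) (\<alpha> (\<beta> y)))"

definition Zl_beta :: "('v \<Rightarrow> 'v \<Rightarrow> 'v::zero) \<Rightarrow> ('v \<Rightarrow> 'v) \<Rightarrow> 'v set" where
  "Zl_beta br \<beta> = {x. \<forall>y. br x (\<beta> y) = 0}"

definition Zr_alpha :: "('v \<Rightarrow> 'v \<Rightarrow> 'v::zero) \<Rightarrow> ('v \<Rightarrow> 'v) \<Rightarrow> 'v set" where
  "Zr_alpha br \<alpha> = {x. \<forall>y. br (\<alpha> y) x = 0}"

end

theory Submission
  imports Defs
begin

text \<open>For both twisted products, bilinearity and multiplicativity with respect to \<open>\<alpha>, \<beta>\<close> are
  inherited from the bracket, so only the two Novikov identities matter. For \<open>x \<star> y = [f x, y]\<close>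
  the BiHom-Jacobi identity and skew-symmetry collapse the difference of the two sides of the
  first identity into a single bracket \<open>[w, \<beta> z]\<close>, which vanishes for all \<open>z\<close> exactly when
  \<open>w \<in> Z\<^sub>l(\<beta>(L))\<close>; the second identity is literally the stated one. For
  \<open>x \<star>' y = [x, f y]\<close> skew-symmetry alone rewrites the first identity into the stated one, while
  Jacobi and skew-symmetry turn the difference of the two sides of the second identity into
  \<open>[\<alpha>\<beta> a, [f(\<beta> y), f(\<alpha> z)]]\<close> for \<open>x = \<beta> a\<close>, and surjectivity of \<open>\<beta>\<close> lets \<open>\<alpha>\<beta> a\<close> range over all of \<open>\<alpha>(L)\<close>.\<close>

lemma linear_additive:
  assumes "Vector_Spaces.linear s s g"
  shows "g (a + b) = g a + g b" "g (a - b) = g a - g b" "g (- a) = - g a"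
  using assms unfolding Vector_Spaces.linear_iff_module_hom
  by (auto intro: module_hom.add module_hom.diff module_hom.neg)

lemma eq_iff_zero_of_diff_eq:
  fixes a b c :: "'a::ab_group_add"
  assumes "a - b = c"
  shows "a = b \<longleftrightarrow> c = 0"
  using assms by auto

lemma surj_forall_iff:
  assumes "surj g"
  shows "(\<forall>x. P x) \<longleftrightarrow> (\<forall>a. P (g a))"
  using assms by (metis surjD)

lemma BiHom_Novikov_iff_identities:
  assumes "bilinear_op scale mu"
    and "Vector_Spaces.linear scale scale \<alpha>" "Vector_Spaces.linear scale scale \<beta>"
    and "\<alpha> \<circ> \<beta> = \<beta> \<circ> \<alpha>"
    and "\<And>x y. \<alpha> (mu x y) = mu (\<alpha> x) (\<alpha> y)" "\<And>x y. \<beta> (mu x y) = mu (\<beta> x) (\<beta> y)"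
  shows "BiHom_Novikov scale mu \<alpha> \<beta> \<longleftrightarrow>
           (\<forall>x y z. mu (mu (\<beta> x) (\<alpha> y)) (\<beta> z) - mu (\<alpha> (\<beta> x)) (mu (\<alpha> y) z)
                  = mu (mu (\<beta> y) (\<alpha> x)) (\<beta> z) - mu (\<alpha> (\<beta> y)) (mu (\<alpha> x) z)) \<and>
           (\<forall>x y z. mu (mu x (\<beta> y)) (\<alpha> (\<beta> z)) = mu (mu x (\<beta> z)) (\<alpha> (\<beta> y)))"
  using assms unfolding BiHom_Novikov_def by simp

locale left_BiHom_Lie_endomorphism =
  fixes scale :: "'k::field \<Rightarrow> 'v::ab_group_add \<Rightarrow> 'v"
    and br :: "'v \<Rightarrow> 'v \<Rightarrow> 'v" and \<alpha> \<beta> f :: "'v \<Rightarrow> 'v"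
  assumes left_BiHom_Lie: "left_BiHom_Lie scale br \<alpha> \<beta>"
    and linear_f: "Vector_Spaces.linear scale scale f"
    and f_comp_\<alpha>: "f \<circ> \<alpha> = \<alpha> \<circ> f" and f_comp_\<beta>: "f \<circ> \<beta> = \<beta> \<circ> f"
begin

lemma linear_br_right: "Vector_Spaces.linear scale scale (br x)"
  and linear_br_left: "Vector_Spaces.linear scale scale (\<lambda>x. br x y)"
  and linear_\<alpha>: "Vector_Spaces.linear scale scale \<alpha>"
  and linear_\<beta>: "Vector_Spaces.linear scale scale \<beta>"
  and \<alpha>_comp_\<beta>: "\<alpha> \<circ> \<beta> = \<beta> \<circ> \<alpha>"
  and \<alpha>_br: "\<alpha> (br x y) = br (\<alpha> x) (\<alpha> y)"
  and \<beta>_br: "\<beta> (br x y) = br (\<beta> x) (\<beta> y)"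
  and BiHom_Jacobi: "br (\<alpha> (\<beta> x)) (br y z) = br (br (\<beta> x) y) (\<beta> z) + br (\<beta> y) (br (\<alpha> x) z)"
  and BiHom_skew: "br (\<beta> x) (\<alpha> y) = - br (\<beta> y) (\<alpha> x)"
  using left_BiHom_Lie unfolding left_BiHom_Lie_def bilinear_op_def by blast+

lemma \<alpha>_\<beta>: "\<alpha> (\<beta> x) = \<beta> (\<alpha> x)"
  using \<alpha>_comp_\<beta> by (metis comp_apply)

lemma f_\<alpha>: "f (\<alpha> x) = \<alpha> (f x)"
  using f_comp_\<alpha> by (metis comp_apply)

lemma f_\<beta>: "f (\<beta> x) = \<beta> (f x)"
  using f_comp_\<beta> by (metis comp_apply)

lemmas br_additive_left = linear_additive[OF linear_br_left]
lemmas f_additive = linear_additive[OF linear_f]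

lemma bilinear_op_left_twist: "bilinear_op scale (\<lambda>x y. br (f x) y)"
  unfolding bilinear_op_def
  using linear_br_right Vector_Spaces.linear_compose[OF linear_f linear_br_left]
  by (simp add: comp_def)

lemma bilinear_op_right_twist: "bilinear_op scale (\<lambda>x y. br x (f y))"
  unfolding bilinear_op_def
  using linear_br_left Vector_Spaces.linear_compose[OF linear_f linear_br_right]
  by (simp add: comp_def)

lemma \<alpha>_left_twist: "\<alpha> (br (f x) y) = br (f (\<alpha> x)) (\<alpha> y)"
  by (simp add: \<alpha>_br f_\<alpha>)

lemma \<beta>_left_twist: "\<beta> (br (f x) y) = br (f (\<beta> x)) (\<beta> y)"
  by (simp add: \<beta>_br f_\<beta>)

lemma \<alpha>_right_twist: "\<alpha> (br x (f y)) = br (\<alpha> x) (f (\<alpha> y))"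
  by (simp add: \<alpha>_br f_\<alpha>)

lemma \<beta>_right_twist: "\<beta> (br x (f y)) = br (\<beta> x) (f (\<beta> y))"
  by (simp add: \<beta>_br f_\<beta>)

lemma left_twist_Novikov_defect:
  "br (f (br (f (\<beta> x)) (\<alpha> y))) (\<beta> z) - br (f (\<alpha> (\<beta> x))) (br (f (\<alpha> y)) z)
     - (br (f (br (f (\<beta> y)) (\<alpha> x))) (\<beta> z) - br (f (\<alpha> (\<beta> y))) (br (f (\<alpha> x)) z))
   = br (f (br (f (\<beta> x)) (\<alpha> y) + br (\<beta> x) (f (\<alpha> y))) - br (f (\<beta> x)) (f (\<alpha> y))) (\<beta> z)"
proof -
  have Jacobi: "br (f (\<alpha> (\<beta> x))) (br (f (\<alpha> y)) z)
      = br (br (f (\<beta> x)) (f (\<alpha> y))) (\<beta> z) + br (f (\<alpha> (\<beta> y))) (br (f (\<alpha> x)) z)"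
    using BiHom_Jacobi[of "f x" "f (\<alpha> y)" z] by (simp add: f_\<alpha> f_\<beta> \<alpha>_\<beta>)
  have skew: "br (f (\<beta> y)) (\<alpha> x) = - br (\<beta> x) (f (\<alpha> y))"
    using BiHom_skew[of y "f x"] BiHom_skew[of x "f y"] by (simp add: f_\<alpha> f_\<beta>)
  show ?thesis
    by (simp add: Jacobi skew f_additive br_additive_left algebra_simps)
qed

lemma BiHom_Novikov_left_twist_iff:
  "BiHom_Novikov scale (\<lambda>x y. br (f x) y) \<alpha> \<beta> \<longleftrightarrow>
     (\<forall>x y. f (br (f (\<beta> x)) (\<alpha> y) + br (\<beta> x) (f (\<alpha> y))) - br (f (\<beta> x)) (f (\<alpha> y))
              \<in> Zl_beta br \<beta>) \<and>
     (\<forall>x y z. br (f (br (f x) (\<beta> y))) (\<alpha> (\<beta> z)) = br (f (br (f x) (\<beta> z))) (\<alpha> (\<beta> y)))"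
proof -
  have first_identity_iff:
    "br (f (br (f (\<beta> x)) (\<alpha> y))) (\<beta> z) - br (f (\<alpha> (\<beta> x))) (br (f (\<alpha> y)) z)
       = br (f (br (f (\<beta> y)) (\<alpha> x))) (\<beta> z) - br (f (\<alpha> (\<beta> y))) (br (f (\<alpha> x)) z)
     \<longleftrightarrow> br (f (br (f (\<beta> x)) (\<alpha> y) + br (\<beta> x) (f (\<alpha> y))) - br (f (\<beta> x)) (f (\<alpha> y))) (\<beta> z) = 0"
    for x y z
    by (rule eq_iff_zero_of_diff_eq[OF left_twist_Novikov_defect])
  \<comment> \<open>Fixing \<open>mu\<close> up front avoids a blow-up in higher-order unification.\<close>
  have "BiHom_Novikov scale (\<lambda>x y. br (f x) y) \<alpha> \<beta> \<longleftrightarrow>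
     (\<forall>x y z. br (f (br (f (\<beta> x)) (\<alpha> y))) (\<beta> z) - br (f (\<alpha> (\<beta> x))) (br (f (\<alpha> y)) z)
       = br (f (br (f (\<beta> y)) (\<alpha> x))) (\<beta> z) - br (f (\<alpha> (\<beta> y))) (br (f (\<alpha> x)) z)) \<and>
     (\<forall>x y z. br (f (br (f x) (\<beta> y))) (\<alpha> (\<beta> z)) = br (f (br (f x) (\<beta> z))) (\<alpha> (\<beta> y)))"
    by (rule BiHom_Novikov_iff_identities[where mu = "\<lambda>x y. br (f x) y", OF bilinear_op_left_twist
          linear_\<alpha> linear_\<beta> \<alpha>_comp_\<beta> \<alpha>_left_twist \<beta>_left_twist])
  then show ?thesis
    by (simp only: first_identity_iff Zl_beta_def mem_Collect_eq)
qed

lemma right_twist_Novikov_defect: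
  "br (br (\<beta> x) (f (\<alpha> y))) (f (\<beta> z)) - br (\<alpha> (\<beta> x)) (f (br (\<alpha> y) (f z)))
     - (br (br (\<beta> y) (f (\<alpha> x))) (f (\<beta> z)) - br (\<alpha> (\<beta> y)) (f (br (\<alpha> x) (f z))))
   = br (br (\<beta> x) (f (\<alpha> y)) + br (f (\<beta> x)) (\<alpha> y)) (f (\<beta> z))
       - br (\<alpha> (\<beta> x)) (f (br (\<alpha> y) (f z))) + br (\<alpha> (\<beta> y)) (f (br (\<alpha> x) (f z)))"
proof -
  have skew: "br (\<beta> y) (f (\<alpha> x)) = - br (f (\<beta> x)) (\<alpha> y)"
    using BiHom_skew[of y "f x"] by (simp add: f_\<alpha> f_\<beta>)
  show ?thesis
    by (simp add: skew br_additive_left algebra_simps)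
qed

lemma right_twist_commutator:
  "br (br (\<beta> a) (f (\<beta> y))) (f (\<alpha> (\<beta> z))) - br (br (\<beta> a) (f (\<beta> z))) (f (\<alpha> (\<beta> y)))
   = br (\<alpha> (\<beta> a)) (br (f (\<beta> y)) (f (\<alpha> z)))"
proof -
  have Jacobi: "br (\<alpha> (\<beta> a)) (br (f (\<beta> y)) (f (\<alpha> z)))
      = br (br (\<beta> a) (f (\<beta> y))) (f (\<alpha> (\<beta> z))) + br (\<beta> (f (\<beta> y))) (br (\<alpha> a) (f (\<alpha> z)))"
    using BiHom_Jacobi[of a "f (\<beta> y)" "f (\<alpha> z)"] by (simp add: f_\<alpha> f_\<beta> \<alpha>_\<beta>)
  have skew: "br (\<beta> (f (\<beta> y))) (br (\<alpha> a) (f (\<alpha> z)))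
      = - br (br (\<beta> a) (f (\<beta> z))) (f (\<alpha> (\<beta> y)))"
    using BiHom_skew[of "br a (f z)" "f (\<beta> y)"] by (simp add: f_\<alpha> f_\<beta> \<alpha>_\<beta> \<alpha>_br \<beta>_br)
  show ?thesis
    by (simp add: Jacobi skew)
qed

lemma right_twist_commutative_iff_Zr_alpha:
  assumes "surj \<beta>"
  shows "(\<forall>x y z. br (br x (f (\<beta> y))) (f (\<alpha> (\<beta> z))) = br (br x (f (\<beta> z))) (f (\<alpha> (\<beta> y))))
     \<longleftrightarrow> (\<forall>y z. br (f (\<beta> y)) (f (\<alpha> z)) \<in> Zr_alpha br \<alpha>)"
proof -
  have "(\<forall>x y z. br (br x (f (\<beta> y))) (f (\<alpha> (\<beta> z))) = br (br x (f (\<beta> z))) (f (\<alpha> (\<beta> y))))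
      \<longleftrightarrow> (\<forall>a y z. br (br (\<beta> a) (f (\<beta> y))) (f (\<alpha> (\<beta> z))) = br (br (\<beta> a) (f (\<beta> z))) (f (\<alpha> (\<beta> y))))"
    by (rule surj_forall_iff[OF assms])
  also have "\<dots> \<longleftrightarrow> (\<forall>a y z. br (\<alpha> (\<beta> a)) (br (f (\<beta> y)) (f (\<alpha> z))) = 0)"
    by (simp only: eq_iff_zero_of_diff_eq[OF right_twist_commutator])
  also have "\<dots> \<longleftrightarrow> (\<forall>u y z. br (\<alpha> u) (br (f (\<beta> y)) (f (\<alpha> z))) = 0)"
    using surj_forall_iff[OF assms, of "\<lambda>u. \<forall>y z. br (\<alpha> u) (br (f (\<beta> y)) (f (\<alpha> z))) = 0"]
    by simp
  also have "\<dots> \<longleftrightarrow> (\<forall>y z. br (f (\<beta> y)) (f (\<alpha> z)) \<in> Zr_alpha br \<alpha>)"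
    unfolding Zr_alpha_def by blast
  finally show ?thesis .
qed

lemma BiHom_Novikov_right_twist_iff:
  assumes "surj \<beta>"
  shows "BiHom_Novikov scale (\<lambda>x y. br x (f y)) \<alpha> \<beta> \<longleftrightarrow>
     (\<forall>x y z. br (br (\<beta> x) (f (\<alpha> y)) + br (f (\<beta> x)) (\<alpha> y)) (f (\<beta> z))
               - br (\<alpha> (\<beta> x)) (f (br (\<alpha> y) (f z)))
               + br (\<alpha> (\<beta> y)) (f (br (\<alpha> x) (f z))) = 0) \<and>
     (\<forall>x y. br (f (\<beta> x)) (f (\<alpha> y)) \<in> Zr_alpha br \<alpha>)"
proof -
  have first_identity_iff:
    "br (br (\<beta> x) (f (\<alpha> y))) (f (\<beta> z)) - br (\<alpha> (\<beta> x)) (f (br (\<alpha> y) (f z)))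
       = br (br (\<beta> y) (f (\<alpha> x))) (f (\<beta> z)) - br (\<alpha> (\<beta> y)) (f (br (\<alpha> x) (f z)))
     \<longleftrightarrow> br (br (\<beta> x) (f (\<alpha> y)) + br (f (\<beta> x)) (\<alpha> y)) (f (\<beta> z))
           - br (\<alpha> (\<beta> x)) (f (br (\<alpha> y) (f z))) + br (\<alpha> (\<beta> y)) (f (br (\<alpha> x) (f z))) = 0"
    for x y z
    by (rule eq_iff_zero_of_diff_eq[OF right_twist_Novikov_defect])
  have "BiHom_Novikov scale (\<lambda>x y. br x (f y)) \<alpha> \<beta> \<longleftrightarrow>
     (\<forall>x y z. br (br (\<beta> x) (f (\<alpha> y))) (f (\<beta> z)) - br (\<alpha> (\<beta> x)) (f (br (\<alpha> y) (f z)))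
       = br (br (\<beta> y) (f (\<alpha> x))) (f (\<beta> z)) - br (\<alpha> (\<beta> y)) (f (br (\<alpha> x) (f z)))) \<and>
     (\<forall>x y z. br (br x (f (\<beta> y))) (f (\<alpha> (\<beta> z))) = br (br x (f (\<beta> z))) (f (\<alpha> (\<beta> y))))"
    by (rule BiHom_Novikov_iff_identities[where mu = "\<lambda>x y. br x (f y)", OF bilinear_op_right_twist
          linear_\<alpha> linear_\<beta> \<alpha>_comp_\<beta> \<alpha>_right_twist \<beta>_right_twist])
  then show ?thesis
    by (simp only: first_identity_iff right_twist_commutative_iff_Zr_alpha[OF assms])
qed

end

theorem proposition2p12:
  fixes scale :: "'k::field \<Rightarrow> 'v::ab_group_add \<Rightarrow> 'v"
    and br :: "'v \<Rightarrow> 'v \<Rightarrow> 'v" and \<alpha> \<beta> f :: "'v \<Rightarrow> 'v"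
  assumes "vector_space scale"
    and "left_BiHom_Lie scale br \<alpha> \<beta>"
    and "Vector_Spaces.linear scale scale f"
    and "f \<circ> \<alpha> = \<alpha> \<circ> f" and "f \<circ> \<beta> = \<beta> \<circ> f"
  shows "(BiHom_Novikov scale (\<lambda>x y. br (f x) y) \<alpha> \<beta> \<longleftrightarrow>
            (\<forall>x y. f (br (f (\<beta> x)) (\<alpha> y) + br (\<beta> x) (f (\<alpha> y))) - br (f (\<beta> x)) (f (\<alpha> y))
                     \<in> Zl_beta br \<beta>) \<and>
            (\<forall>x y z. br (f (br (f x) (\<beta> y))) (\<alpha> (\<beta> z)) = br (f (br (f x) (\<beta> z))) (\<alpha> (\<beta> y))))
       \<and> (bij \<alpha> \<and> bij \<beta> \<longrightarrow>
          (BiHom_Novikov scale (\<lambda>x y. br x (f y)) \<alpha> \<beta> \<longleftrightarrow>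
            (\<forall>x y z. br (br (\<beta> x) (f (\<alpha> y)) + br (f (\<beta> x)) (\<alpha> y)) (f (\<beta> z))
                      - br (\<alpha> (\<beta> x)) (f (br (\<alpha> y) (f z)))
                      + br (\<alpha> (\<beta> y)) (f (br (\<alpha> x) (f z))) = 0) \<and>
            (\<forall>x y. br (f (\<beta> x)) (f (\<alpha> y)) \<in> Zr_alpha br \<alpha>)))"
proof -
  interpret left_BiHom_Lie_endomorphism scale br \<alpha> \<beta> f
    using assms(2-5) by (rule left_BiHom_Lie_endomorphism.intro)
  show ?thesis
    by (intro conjI impI BiHom_Novikov_left_twist_iff BiHom_Novikov_right_twist_iff)
      (simp add: bij_is_surj)
qed

end
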